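(* Let $k$ be a positive integer, $V$ a finite-dimensional complex vector space, and $P_1,\dots,P_k$ pairwise commuting operators on $V$ each of order at most $2$ (i.e. $P_i^2=\mathrm{id}$). For $\varepsilon=(\varepsilon_1,\dots,\varepsilon_k)\in\{\pm1\}^k$ let $V_\varepsilon=\prod_{i=1}^k(1+\varepsilon_iP_i)V$. Let $A$ be an operator on $V$ commuting with $P_1,\dots,P_k$, and for $\varepsilon\in\{\pm1\}^k$ let $\mathcal E_{\varepsilon,+}$ (resp. $\mathcal E_{\varepsilon,-}$) be the multiset of positive (resp. negative) characteristic roots of $A|_{V_\varepsilon}:V_\varepsilon\to V_\varepsilon$. If the spectrum of $A$ coincides with the spectrum of $(\prod_{i\in I}P_i)A$ for every nonempty subset $I\subseteq\{1,\dots,k\}$, then $\mathcal E_{\varepsilon,+}=-\mathcal E_{\varepsilon,-}$ for every $\varepsilon\ne(1,1,\dots,1)$, and the spectrum of $A$ contains a sub-multiset of size $\dim V-\dim V_{(1,1,\dots,1)}$ which is symmetric about the origin.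
   Context: The spectrum of an operator is its multiset of characteristic roots (eigenvalues with algebraic multiplicity). A multiset $M$ of complex numbers is symmetric about the origin if $M=-M$. *)

theory Defs
  imports "Jordan_Normal_Form.DL_Rank" "Jordan_Normal_Form.Char_Poly" "HOL-Computational_Algebra.Polynomial"
begin

text \<open>Operators on V = C^n are represented by n x n complex matrices.\<close>

definition mat_prod_list :: "nat \<Rightarrow> complex mat list \<Rightarrow> complex mat" where
  "mat_prod_list n Ms = foldr (*) Ms (1\<^sub>m n)"

definition mat_prod_set :: "nat \<Rightarrow> (nat \<Rightarrow> complex mat) \<Rightarrow> nat set \<Rightarrow> complex mat" where
  "mat_prod_set n P I = mat_prod_list n (map P (sorted_list_of_set I))"

definition spectrum_mset :: "complex mat \<Rightarrow> complex multiset" where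
  "spectrum_mset A = proots (char_poly A)"

text \<open>The operator prod_i (1 + eps_i P_i), for eps :: nat => int with values in {1,-1}.\<close>
definition eps_op :: "nat \<Rightarrow> nat \<Rightarrow> (nat \<Rightarrow> complex mat) \<Rightarrow> (nat \<Rightarrow> int) \<Rightarrow> complex mat" where
  "eps_op n k P eps = mat_prod_list n (map (\<lambda>i. 1\<^sub>m n + of_int (eps i) \<cdot>\<^sub>m P i) [0..<k])"

definition eps_space :: "nat \<Rightarrow> nat \<Rightarrow> (nat \<Rightarrow> complex mat) \<Rightarrow> (nat \<Rightarrow> int) \<Rightarrow> complex vec set" where
  "eps_space n k P eps = {eps_op n k P eps *\<^sub>v w | w. w \<in> carrier_vec n}"

definition col_dim :: "nat \<Rightarrow> complex mat \<Rightarrow> nat" where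
  "col_dim n M = vec_space.rank n (M :: complex mat)"

text \<open>A matrix representation of the restriction of A to an A-invariant subspace W of C^n:
  an m x m matrix B such that A S = S B, where the columns of the n x m matrix S form a basis of W
  (S injective and its image is W).\<close>
definition restr_rep :: "nat \<Rightarrow> complex mat \<Rightarrow> complex vec set \<Rightarrow> complex mat \<Rightarrow> bool" where
  "restr_rep n A W B \<longleftrightarrow> (\<exists>m S. S \<in> carrier_mat n m \<and> B \<in> carrier_mat m m \<and>
      (\<forall>x \<in> carrier_vec m. S *\<^sub>v x = 0\<^sub>v n \<longrightarrow> x = 0\<^sub>v m) \<and>
      W = {S *\<^sub>v x | x. x \<in> carrier_vec m} \<and> A * S = S * B)"

definition restr_char_poly :: "nat \<Rightarrow> complex mat \<Rightarrow> complex vec set \<Rightarrow> complex poly" where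
  "restr_char_poly n A W = char_poly (SOME B. restr_rep n A W B)"

definition pos_roots :: "complex multiset \<Rightarrow> complex multiset" where
  "pos_roots M = filter_mset (\<lambda>z. z \<in> \<real> \<and> Re z > 0) M"

definition neg_roots :: "complex multiset \<Rightarrow> complex multiset" where
  "neg_roots M = filter_mset (\<lambda>z. z \<in> \<real> \<and> Re z < 0) M"

end

theory Submission
  imports Defs "Jordan_Normal_Form.Schur_Decomposition"
begin

text \<open>The operators \<open>F\<^sub>\<epsilon> = \<Prod>\<^sub>i (1 + \<epsilon>\<^sub>i P\<^sub>i)\<close> satisfy \<open>F\<^sub>\<epsilon>\<^sup>2 = 2\<^sup>k F\<^sub>\<epsilon>\<close> and \<open>\<Sum>\<^sub>\<epsilon> F\<^sub>\<epsilon> = 2\<^sup>k\<close>,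
  and \<open>P\<^sub>I = \<Prod>\<^sub>i\<^sub>\<in>\<^sub>I P\<^sub>i\<close> acts on \<open>V\<^sub>\<epsilon> = F\<^sub>\<epsilon> V\<close> as the scalar \<open>\<chi>\<^sub>I(\<epsilon>) = \<Prod>\<^sub>i\<^sub>\<in>\<^sub>I \<epsilon>\<^sub>i\<close>.
  Since \<open>tr (C F\<^sub>\<epsilon>) = 2\<^sup>k tr (C|\<^sub>V\<^sub>\<epsilon>)\<close> for every \<open>C\<close> preserving \<open>V\<^sub>\<epsilon>\<close>, comparing the traces of
  all powers shows that the spectrum of \<open>P\<^sub>I A\<close> is the union over \<open>\<epsilon>\<close> of \<open>\<chi>\<^sub>I(\<epsilon>) \<E>\<^sub>\<epsilon>\<close>, where
  \<open>\<E>\<^sub>\<epsilon>\<close> is the spectrum of \<open>A|\<^sub>V\<^sub>\<epsilon>\<close>. By hypothesis all these twisted unions coincide, so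
  for every \<open>z\<close> the function \<open>\<epsilon> \<mapsto> mult(z, \<E>\<^sub>\<epsilon>) - mult(-z, \<E>\<^sub>\<epsilon>)\<close> has a constant
  transform over the characters \<open>\<chi>\<^sub>I\<close>; by Fourier inversion it vanishes off \<open>\<epsilon> = (1,\<dots>,1)\<close>.
  The symmetric sub-multiset is the union of the \<open>\<E>\<^sub>\<epsilon>\<close> with \<open>\<epsilon> \<noteq> (1,\<dots>,1)\<close>.\<close>

section \<open>Traces and spectra\<close>

definition mat_trace :: "'a::comm_ring_1 mat \<Rightarrow> 'a" where
  "mat_trace M = (\<Sum>i<dim_row M. M $$ (i,i))"

lemma mat_trace_mult_comm:
  fixes A B :: "'a::comm_ring_1 mat"
  assumes A: "A \<in> carrier_mat n m" and B: "B \<in> carrier_mat m n"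
  shows "mat_trace (A * B) = mat_trace (B * A)"
proof -
  have "mat_trace (A * B) = (\<Sum>i<n. \<Sum>l<m. A $$ (i,l) * B $$ (l,i))"
    using A B by (simp add: mat_trace_def scalar_prod_def atLeast0LessThan)
  also have "\<dots> = (\<Sum>l<m. \<Sum>i<n. B $$ (l,i) * A $$ (i,l))"
    by (subst sum.swap) (simp add: mult.commute)
  also have "\<dots> = mat_trace (B * A)"
    using A B by (simp add: mat_trace_def scalar_prod_def atLeast0LessThan)
  finally show ?thesis .
qed

lemma mat_trace_smult: "M \<in> carrier_mat n n \<Longrightarrow> mat_trace (c \<cdot>\<^sub>m M) = c * mat_trace M"
  by (simp add: mat_trace_def sum_distrib_left)

lemma mat_trace_one: "mat_trace (1\<^sub>m n :: 'a::comm_ring_1 mat) = of_nat n"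
  by (simp add: mat_trace_def)

lemma mat_trace_similar:
  fixes M T :: "'a::comm_ring_1 mat"
  assumes "similar_mat_wit M T P Q"
  shows "mat_trace M = mat_trace T"
proof -
  define n where "n = dim_row M"
  note wit = similar_mat_witD[OF n_def assms]
  have "mat_trace M = mat_trace (P * (T * Q))"
    using wit by (simp add: assoc_mult_mat[of P n n T n Q n])
  also have "\<dots> = mat_trace ((T * Q) * P)"
    using wit by (intro mat_trace_mult_comm) auto
  also have "\<dots> = mat_trace T"
    using wit by (simp add: assoc_mult_mat[of T n n Q n P n])
  finally show ?thesis .
qed

lemma upper_triangular_mult:
  fixes A B :: "'a::comm_ring_1 mat"
  assumes A: "A \<in> carrier_mat n n" and B: "B \<in> carrier_mat n n"
    and utA: "upper_triangular A" and utB: "upper_triangular B"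
  shows "upper_triangular (A * B)"
    and "\<And>i. i < n \<Longrightarrow> (A * B) $$ (i,i) = A $$ (i,i) * B $$ (i,i)"
proof -
  have entry: "(A * B) $$ (i,l) = (\<Sum>t\<in>{0..<n}. A $$ (i,t) * B $$ (t,l))"
    if "i < n" "l < n" for i l
    using that A B by (simp add: scalar_prod_def)
  have vanish: "A $$ (i,t) * B $$ (t,l) = 0" if "i < n" "t < n" "l \<le> i" "t \<noteq> i \<or> l \<noteq> i" for i t l
    using upper_triangularD[OF utA, of t i] upper_triangularD[OF utB, of l t] A B that
    by (cases "t < i") auto
  show "upper_triangular (A * B)"
  proof
    fix i l assume "l < i" "i < dim_row (A * B)"
    then show "(A * B) $$ (i,l) = 0"
      using A entry[of i l] vanish[of i _ l] by (auto intro: sum.neutral)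
  qed
  fix i assume i: "i < n"
  have "(A * B) $$ (i,i) = A $$ (i,i) * B $$ (i,i) + (\<Sum>t\<in>{0..<n} - {i}. A $$ (i,t) * B $$ (t,i))"
    using entry[OF i i] i by (simp add: sum.remove)
  also have "(\<Sum>t\<in>{0..<n} - {i}. A $$ (i,t) * B $$ (t,i)) = 0"
    using vanish[OF i, of _ i] by (intro sum.neutral) auto
  finally show "(A * B) $$ (i,i) = A $$ (i,i) * B $$ (i,i)" by simp
qed

lemma upper_triangular_pow:
  fixes T :: "'a::comm_ring_1 mat"
  assumes T: "T \<in> carrier_mat n n" and ut: "upper_triangular T"
  shows "upper_triangular (T ^\<^sub>m j) \<and> (\<forall>i<n. (T ^\<^sub>m j) $$ (i,i) = T $$ (i,i) ^ j)"
proof (induction j)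
  case 0
  show ?case using T by auto
next
  case (Suc j)
  have Tj: "T ^\<^sub>m j \<in> carrier_mat n n" using T by simp
  show ?case
    using Suc upper_triangular_mult[OF Tj T _ ut] by simp
qed

lemma proots_prod_linear_factors:
  "proots (\<Prod>a\<leftarrow>as. [:- a, 1:]) = mset (as :: 'a::idom list)"
proof (induction as)
  case (Cons a as)
  have "(\<Prod>a\<leftarrow>as. [:- a, 1:]) \<noteq> 0"
    by (auto simp: prod_list_zero_iff)
  with Cons.IH show ?case
    by (simp add: proots_mult del: mult_pCons_left)
qed simp

lemma spectrum_mset_upper_triangular:
  fixes M :: "complex mat"
  assumes M: "M \<in> carrier_mat n n"
  obtains T P Q where "T \<in> carrier_mat n n" "upper_triangular T" "similar_mat_wit M T P Q"
    and "spectrum_mset M = mset (diag_mat T)"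
proof -
  obtain as where cp: "char_poly M = (\<Prod>a\<leftarrow>as. [:- a, 1:])"
    using char_poly_factorized[OF M] by blast
  define T where "T = schur_upper_triangular M as"
  have T: "T \<in> carrier_mat n n" and ut: "upper_triangular T" and sim: "similar_mat M T"
    using schur_upper_triangular[OF M cp] unfolding T_def by auto
  have "spectrum_mset M = proots (char_poly T)"
    unfolding spectrum_mset_def using char_poly_similar[OF sim] by simp
  also have "\<dots> = mset (diag_mat T)"
    by (simp add: char_poly_upper_triangular[OF T ut] proots_prod_linear_factors)
  finally show ?thesis
    using that T ut sim unfolding similar_mat_def by blast
qed

lemma size_spectrum_mset: "M \<in> carrier_mat n n \<Longrightarrow> size (spectrum_mset M) = n"
  by (erule spectrum_mset_upper_triangular) (simp add: diag_mat_def)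

lemma mat_trace_pow_eq_power_sum:
  fixes M :: "complex mat"
  assumes M: "M \<in> carrier_mat n n"
  shows "mat_trace (M ^\<^sub>m j) = (\<Sum>z\<in>#spectrum_mset M. z ^ j)"
proof -
  obtain T P Q where T: "T \<in> carrier_mat n n" and ut: "upper_triangular T"
    and sim: "similar_mat_wit M T P Q" and spec: "spectrum_mset M = mset (diag_mat T)"
    using spectrum_mset_upper_triangular[OF M] .
  have "mat_trace (M ^\<^sub>m j) = mat_trace (T ^\<^sub>m j)"
    by (rule mat_trace_similar[OF similar_mat_wit_pow[OF sim]])
  also have "\<dots> = (\<Sum>i<n. T $$ (i,i) ^ j)"
    using upper_triangular_pow[OF T ut, of j] T by (simp add: mat_trace_def)
  also have "\<dots> = (\<Sum>z\<in>#spectrum_mset M. z ^ j)"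
    using T by (simp add: spec diag_mat_def sum_unfold_sum_mset multiset.map_comp comp_def atLeast0LessThan)
  finally show ?thesis .
qed

lemma multiset_eq_if_power_sums_eq:
  fixes M N :: "'a::field_char_0 multiset"
  assumes power_sums: "\<And>j. (\<Sum>z\<in>#M. z ^ j) = (\<Sum>z\<in>#N. z ^ j)"
  shows "M = N"
proof (rule multiset_eqI)
  fix z
  define W where "W = (set_mset M \<union> set_mset N) - {z}"
  define p where "p = (\<Prod>w\<in>W. [:- w, 1:])"
  have poly_p: "poly p x = (\<Prod>w\<in>W. x - w)" for x
    unfolding p_def by (simp add: poly_prod)
  have "poly p z \<noteq> 0"
    unfolding poly_p W_def by simp
  have sum_poly_p: "(\<Sum>x\<in>#K. poly p x) = of_nat (count K z) * poly p z"
    if "set_mset K - {z} \<subseteq> W" for K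
  proof -
    have "(\<Sum>x\<in>#K. poly p x) = (\<Sum>x\<in>#filter_mset (\<lambda>x. x = z) K. poly p x)
        + (\<Sum>x\<in>#filter_mset (\<lambda>x. x \<noteq> z) K. poly p x)"
      by (metis image_mset_union multiset_partition sum_mset.union)
    also have "(\<Sum>x\<in>#filter_mset (\<lambda>x. x \<noteq> z) K. poly p x) = 0"
      using that unfolding poly_p W_def by (intro sum_mset.neutral) auto
    finally show ?thesis by (simp add: filter_eq_replicate_mset)
  qed
  have linear: "(\<Sum>x\<in>#K. poly p x) = (\<Sum>i\<le>degree p. coeff p i * (\<Sum>x\<in>#K. x ^ i))" for K
    unfolding poly_altdef by (induction K) (simp_all add: sum.distrib distrib_left)
  have "(\<Sum>x\<in>#M. poly p x) = (\<Sum>x\<in>#N. poly p x)"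
    unfolding linear power_sums ..
  then have "of_nat (count M z) * poly p z = of_nat (count N z) * poly p z"
    by (simp add: sum_poly_p W_def Diff_mono)
  with \<open>poly p z \<noteq> 0\<close> show "count M z = count N z" by simp
qed

section \<open>Ranges, factorizations and restrictions\<close>

lemma mat_eq_if_mult_vec_eq:
  fixes A B :: "'a::semiring_1 mat"
  assumes A: "A \<in> carrier_mat n m" and B: "B \<in> carrier_mat n m"
    and eq: "\<And>v. v \<in> carrier_vec m \<Longrightarrow> A *\<^sub>v v = B *\<^sub>v v"
  shows "A = B"
proof (rule eq_matI)
  fix i j assume i: "i < dim_row B" and j: "j < dim_col B"
  have "(A *\<^sub>v unit_vec m j) $ i = (B *\<^sub>v unit_vec m j) $ i"
    using eq[of "unit_vec m j"] by simp
  then show "A $$ (i,j) = B $$ (i,j)"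
    using A B i j by simp
qed (use A B in auto)

lemma smult_mat_mult_vec:
  "A \<in> carrier_mat n m \<Longrightarrow> v \<in> carrier_vec m \<Longrightarrow>
    (c \<cdot>\<^sub>m A) *\<^sub>v v = c \<cdot>\<^sub>v (A *\<^sub>v (v :: 'a::comm_ring_1 vec))"
  by (rule eq_vecI) (auto simp: scalar_prod_def sum_distrib_left ac_simps)

lemma mat_factor_through_range:
  fixes S M :: "'a::comm_ring_1 mat"
  assumes S: "S \<in> carrier_mat n m" and M: "M \<in> carrier_mat n p"
    and range: "\<And>w. w \<in> carrier_vec p \<Longrightarrow> M *\<^sub>v w \<in> {S *\<^sub>v x | x. x \<in> carrier_vec m}"
  obtains X where "X \<in> carrier_mat m p" and "M = S * X"
proof -
  have "\<forall>j. \<exists>x. j < p \<longrightarrow> x \<in> carrier_vec m \<and> M *\<^sub>v unit_vec p j = S *\<^sub>v x"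
    using range[OF unit_vec_carrier] by blast
  then obtain g where g: "\<And>j. j < p \<Longrightarrow> g j \<in> carrier_vec m \<and> M *\<^sub>v unit_vec p j = S *\<^sub>v g j"
    by metis
  define X where "X = mat m p (\<lambda>(i,j). g j $ i)"
  have X: "X \<in> carrier_mat m p" unfolding X_def by simp
  have "S * X = M"
  proof (rule eq_matI)
    fix i j assume "i < dim_row M" "j < dim_col M"
    then have i: "i < n" and j: "j < p" using M by auto
    have "col X j = g j"
      using g[OF j] j unfolding X_def by (auto simp: col_def)
    then have "(S * X) $$ (i,j) = (S *\<^sub>v g j) $ i"
      using i j S X by simp
    also have "\<dots> = (M *\<^sub>v unit_vec p j) $ i"
      using g[OF j] by simp
    also have "\<dots> = M $$ (i,j)"
      using M i j by simp
    finally show "(S * X) $$ (i,j) = M $$ (i,j)" .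
  qed (use S M X in auto)
  with X that show ?thesis by blast
qed

lemma injective_mat_cancel_left:
  fixes S :: "'a::comm_ring_1 mat"
  assumes S: "S \<in> carrier_mat n m"
    and inj: "\<And>x. x \<in> carrier_vec m \<Longrightarrow> S *\<^sub>v x = 0\<^sub>v n \<Longrightarrow> x = 0\<^sub>v m"
    and X: "X \<in> carrier_mat m p" and Y: "Y \<in> carrier_mat m p" and eq: "S * X = S * Y"
  shows "X = Y"
proof (rule mat_eq_if_mult_vec_eq[OF X Y])
  fix v :: "'a vec" assume v: "v \<in> carrier_vec p"
  have "S *\<^sub>v (X *\<^sub>v v - Y *\<^sub>v v) = (S * X) *\<^sub>v v - (S * Y) *\<^sub>v v"
    using S X Y v by (simp add: mult_minus_distrib_mat_vec)
  also have "\<dots> = 0\<^sub>v n"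
    using S Y v unfolding eq by simp
  finally have "X *\<^sub>v v - Y *\<^sub>v v = 0\<^sub>v m"
    using X Y v by (intro inj) auto
  then show "X *\<^sub>v v = Y *\<^sub>v v"
    using X Y by (auto simp: vec_eq_iff)
qed

lemma pow_mat_intertwine:
  fixes C S B :: "'a::comm_ring_1 mat"
  assumes C: "C \<in> carrier_mat n n" and S: "S \<in> carrier_mat n m" and B: "B \<in> carrier_mat m m"
    and CS: "C * S = S * B"
  shows "C ^\<^sub>m j * S = S * B ^\<^sub>m j"
proof (induction j)
  case 0
  show ?case using C S B by simp
next
  case (Suc j)
  have "C ^\<^sub>m Suc j * S = C ^\<^sub>m j * (C * S)"
    using C S by (simp add: assoc_mult_mat[of _ n n _ n _ m])
  also have "\<dots> = (C ^\<^sub>m j * S) * B"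
    using C S B by (simp add: CS assoc_mult_mat[of _ n n _ m _ m])
  also have "\<dots> = S * B ^\<^sub>m Suc j"
    using S B by (simp add: Suc assoc_mult_mat[of _ n m _ m _ m])
  finally show ?case .
qed

lemma mult_range_smult:
  fixes X F S :: "'a::comm_ring_1 mat"
  assumes X: "X \<in> carrier_mat n n" and F: "F \<in> carrier_mat n p" and S: "S \<in> carrier_mat n m"
    and XF: "X * F = c \<cdot>\<^sub>m F"
    and range: "\<And>v. v \<in> carrier_vec m \<Longrightarrow> S *\<^sub>v v \<in> {F *\<^sub>v w | w. w \<in> carrier_vec p}"
  shows "X * S = c \<cdot>\<^sub>m S"
proof (rule mat_eq_if_mult_vec_eq[of _ n m])
  fix v :: "'a vec" assume v: "v \<in> carrier_vec m"
  obtain w where w: "w \<in> carrier_vec p" and Sv: "S *\<^sub>v v = F *\<^sub>v w"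
    using range[OF v] by blast
  have "(X * S) *\<^sub>v v = (X * F) *\<^sub>v w"
    using X F S v w by (simp add: Sv)
  also have "\<dots> = (c \<cdot>\<^sub>m S) *\<^sub>v v"
    unfolding XF smult_mat_mult_vec[OF F w] smult_mat_mult_vec[OF S v] Sv ..
  finally show "(X * S) *\<^sub>v v = (c \<cdot>\<^sub>m S) *\<^sub>v v" .
qed (use X S in auto)

text \<open>If \<open>F\<^sup>2 = c F\<close> and the columns of \<open>S\<close> form a basis of the range of \<open>F\<close>, then \<open>F = S R\<close> with
  \<open>R S = c\<close>; hence \<open>tr (C F) = tr (R C S) = c tr B\<close> whenever \<open>C S = S B\<close>.\<close>
lemma mat_trace_mult_range_idempotent:
  fixes F S C B :: "'a::comm_ring_1 mat"
  assumes F: "F \<in> carrier_mat n n" and FF: "F * F = c \<cdot>\<^sub>m F"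
    and S: "S \<in> carrier_mat n m"
    and inj: "\<And>x. x \<in> carrier_vec m \<Longrightarrow> S *\<^sub>v x = 0\<^sub>v n \<Longrightarrow> x = 0\<^sub>v m"
    and range: "{S *\<^sub>v x | x. x \<in> carrier_vec m} = {F *\<^sub>v w | w. w \<in> carrier_vec n}"
    and C: "C \<in> carrier_mat n n" and B: "B \<in> carrier_mat m m" and CS: "C * S = S * B"
  shows "mat_trace (C * F) = c * mat_trace B"
proof -
  have "F *\<^sub>v w \<in> {S *\<^sub>v x | x. x \<in> carrier_vec m}" if "w \<in> carrier_vec n" for w
    using that unfolding range by blast
  then obtain R where R: "R \<in> carrier_mat m n" and FSR: "F = S * R"
    using mat_factor_through_range[OF S F] by blast
  have FS: "F * S = c \<cdot>\<^sub>m S"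
    by (rule mult_range_smult[OF F F S FF]) (unfold range[symmetric], blast)
  have "S * (R * S) = (S * R) * S"
    using S R by simp
  also have "\<dots> = S * (c \<cdot>\<^sub>m 1\<^sub>m m)"
    using S by (simp add: FSR[symmetric] FS mult_smult_distrib[of S n m _ m])
  finally have "S * (R * S) = S * (c \<cdot>\<^sub>m 1\<^sub>m m)" .
  from injective_mat_cancel_left[OF S inj _ _ this, where p = m]
  have RS: "R * S = c \<cdot>\<^sub>m 1\<^sub>m m"
    using S R by auto
  have "mat_trace (C * F) = mat_trace ((C * S) * R)"
    using C S R by (simp add: FSR)
  also have "\<dots> = mat_trace (R * (C * S))"
    using C S R by (intro mat_trace_mult_comm) auto
  also have "\<dots> = mat_trace ((R * S) * B)"
    using S R B by (simp add: CS)
  also have "\<dots> = c * mat_trace B"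
    using B by (simp add: RS mult_smult_assoc_mat[of "1\<^sub>m m" m m B m] mat_trace_smult)
  finally show ?thesis .
qed

lemma (in vectorspace) span_maximal_lin_indpt:
  assumes S: "S \<subseteq> carrier V" and max: "maximal U (\<lambda>T. T \<subseteq> S \<and> lin_indpt T)"
  shows "span U = span S"
proof
  have US: "U \<subseteq> S" and U_indpt: "lin_indpt U"
    using max unfolding maximal_def by auto
  have U: "U \<subseteq> carrier V" using US S by auto
  show "span U \<subseteq> span S" using US by (rule span_is_monotone)
  have "S \<subseteq> span U"
  proof
    fix s assume s: "s \<in> S"
    show "s \<in> span U"
    proof (cases "s \<in> U")
      case True
      then show ?thesis using in_own_span[OF U] by auto
    next
      case False
      show ?thesis
      proof (rule ccontr)
        assume "s \<notin> span U"
        then have "lin_indpt (U \<union> {s})"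
          using lin_dep_iff_in_span[OF U U_indpt _ False] s S by auto
        moreover have "U \<union> {s} \<subseteq> S" using US s by auto
        ultimately have "U \<union> {s} = U" using max unfolding maximal_def by blast
        then show False using False by auto
      qed
    qed
  qed
  then show "span S \<subseteq> span U"
    using span_is_subset span_is_submodule[OF U] by blast
qed

lemma (in vec_space) injective_basis_of_range:
  assumes F: "F \<in> carrier_mat n nc"
  obtains S where "S \<in> carrier_mat n (rank F)"
    and "\<And>x. x \<in> carrier_vec (rank F) \<Longrightarrow> S *\<^sub>v x = 0\<^sub>v n \<Longrightarrow> x = 0\<^sub>v (rank F)"
    and "{S *\<^sub>v x | x. x \<in> carrier_vec (rank F)} = {F *\<^sub>v w | w. w \<in> carrier_vec nc}"
proof -
  let ?C = "set (cols F)"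
  have C: "?C \<subseteq> carrier_vec n" using F cols_dim by blast
  have "lin_indpt {}" unfolding lin_dep_def by auto
  then obtain U where "finite U" and max: "maximal U (\<lambda>T. T \<subseteq> ?C \<and> lin_indpt T)"
    using maximal_exists_superset[of ?C "\<lambda>T. T \<subseteq> ?C \<and> lin_indpt T" "{}"] by auto
  have UC: "U \<subseteq> ?C" and U_indpt: "lin_indpt U" using max unfolding maximal_def by auto
  obtain us where us: "set us = U" "distinct us" using finite_distinct_list[OF \<open>finite U\<close>] by blast
  define S where "S = mat_of_cols n us"
  have rank: "rank F = length us"
    using rank_card_indpt[OF F max] us distinct_card by metis
  have S: "S \<in> carrier_mat n (rank F)" unfolding S_def rank by simp
  have cols_S: "cols S = us" unfolding S_def using UC C us by (simp add: cols_mat_of_cols)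
  have inj: "x = 0\<^sub>v (rank F)" if x: "x \<in> carrier_vec (rank F)" and Sx: "S *\<^sub>v x = 0\<^sub>v n" for x
  proof (rule ccontr)
    assume "x \<noteq> 0\<^sub>v (rank F)"
    then have "lin_dep (set (cols S))" using lin_depI[OF S x _ Sx] cols_S us by auto
    then show False using U_indpt cols_S us by simp
  qed
  have "{S *\<^sub>v x | x. x \<in> carrier_vec (rank F)} = col_space S"
    unfolding col_space_eq[OF S] using S by auto
  also have "\<dots> = col_space F"
    unfolding col_space_def cols_S us span_maximal_lin_indpt[OF C max] ..
  also have "\<dots> = {F *\<^sub>v w | w. w \<in> carrier_vec nc}"
    unfolding col_space_eq[OF F] using F by auto
  finally have range: "{S *\<^sub>v x | x. x \<in> carrier_vec (rank F)} = {F *\<^sub>v w | w. w \<in> carrier_vec nc}" .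
  show ?thesis using that[OF S inj range] .
qed

lemma one_smult_mat [simp]: "(1::'a::comm_ring_1) \<cdot>\<^sub>m X = X"
  by (rule eq_matI) auto

lemma smult_smult_mat: "a \<cdot>\<^sub>m (b \<cdot>\<^sub>m X) = (a * b :: 'a::comm_ring_1) \<cdot>\<^sub>m X"
  by (rule eq_matI) auto

lemma pow_mat_smult:
  fixes B :: "'a::comm_ring_1 mat"
  assumes B: "B \<in> carrier_mat m m"
  shows "(c \<cdot>\<^sub>m B) ^\<^sub>m j = c ^ j \<cdot>\<^sub>m B ^\<^sub>m j"
proof (induction j)
  case 0
  show ?case using B by simp
next
  case (Suc j)
  have Bj: "B ^\<^sub>m j \<in> carrier_mat m m" using B by simp
  have "(c \<cdot>\<^sub>m B) ^\<^sub>m Suc j = (c ^ j \<cdot>\<^sub>m B ^\<^sub>m j) * (c \<cdot>\<^sub>m B)"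
    using Suc by simp
  also have "\<dots> = c ^ j \<cdot>\<^sub>m (B ^\<^sub>m j * (c \<cdot>\<^sub>m B))"
    using Bj B by (intro mult_smult_assoc_mat) auto
  also have "\<dots> = c ^ j \<cdot>\<^sub>m (c \<cdot>\<^sub>m (B ^\<^sub>m j * B))"
    by (subst mult_smult_distrib[OF Bj B]) simp
  also have "\<dots> = c ^ Suc j \<cdot>\<^sub>m B ^\<^sub>m Suc j"
    by (simp add: smult_smult_mat ac_simps)
  finally show ?case .
qed

lemma mat_prod_list_Nil: "mat_prod_list n [] = 1\<^sub>m n"
  by (simp add: mat_prod_list_def)

lemma mat_prod_list_Cons: "mat_prod_list n (M # Ms) = M * mat_prod_list n Ms"
  by (simp add: mat_prod_list_def)

lemma mat_prod_list_carrier: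
  "\<forall>M\<in>set Ms. M \<in> carrier_mat n n \<Longrightarrow> mat_prod_list n Ms \<in> carrier_mat n n"
  by (induction Ms) (auto simp: mat_prod_list_def)

lemma mat_prod_list_append:
  assumes "\<forall>M\<in>set (Ms @ Ns). M \<in> carrier_mat n n"
  shows "mat_prod_list n (Ms @ Ns) = mat_prod_list n Ms * mat_prod_list n Ns"
  using assms
proof (induction Ms)
  case Nil
  then show ?case
    using mat_prod_list_carrier[of Ns n] by (simp add: mat_prod_list_Nil)
next
  case (Cons M Ms)
  then have "mat_prod_list n Ms \<in> carrier_mat n n" "mat_prod_list n Ns \<in> carrier_mat n n"
    "M \<in> carrier_mat n n"
    using mat_prod_list_carrier by auto
  with Cons show ?case
    by (simp add: mat_prod_list_Cons assoc_mult_mat[of M n n _ n _ n])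
qed

lemma mat_prod_list_commute:
  assumes C: "C \<in> carrier_mat n n"
    and Ms: "\<forall>M\<in>set Ms. M \<in> carrier_mat n n \<and> C * M = M * C"
  shows "C * mat_prod_list n Ms = mat_prod_list n Ms * C"
  using Ms
proof (induction Ms)
  case Nil
  show ?case using C by (simp add: mat_prod_list_Nil)
next
  case (Cons M Ms)
  have R: "mat_prod_list n Ms \<in> carrier_mat n n"
    using mat_prod_list_carrier Cons.prems by auto
  have M: "M \<in> carrier_mat n n" and CM: "C * M = M * C"
    using Cons.prems by auto
  have "C * (M * mat_prod_list n Ms) = (C * M) * mat_prod_list n Ms"
    using C M R by simp
  also have "\<dots> = M * (C * mat_prod_list n Ms)"
    using C M R by (simp add: CM)
  also have "\<dots> = (M * mat_prod_list n Ms) * C"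
    using C M R Cons by (simp add: assoc_mult_mat[of M n n _ n _ n])
  finally show ?case by (simp add: mat_prod_list_Cons)
qed

lemma mat_prod_list_mult_eigen:
  assumes C: "C \<in> carrier_mat n n"
    and Ms: "\<forall>M\<in>set Ms. M \<in> carrier_mat n n \<and> C * M = M * C"
    and M0: "M0 \<in> set Ms" and CM0: "C * M0 = c \<cdot>\<^sub>m M0"
  shows "C * mat_prod_list n Ms = c \<cdot>\<^sub>m mat_prod_list n Ms"
  using Ms M0
proof (induction Ms)
  case (Cons M Ms)
  have R: "mat_prod_list n Ms \<in> carrier_mat n n"
    using mat_prod_list_carrier Cons.prems by auto
  have M: "M \<in> carrier_mat n n" and CM: "C * M = M * C"
    using Cons.prems by auto
  have "C * (M * mat_prod_list n Ms) = (C * M) * mat_prod_list n Ms"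
    using C M R by simp
  also have "\<dots> = c \<cdot>\<^sub>m (M * mat_prod_list n Ms)"
  proof (cases "M = M0")
    case True
    then show ?thesis
      using M R CM0 by (simp add: mult_smult_assoc_mat)
  next
    case False
    then have "C * mat_prod_list n Ms = c \<cdot>\<^sub>m mat_prod_list n Ms"
      using Cons by simp
    then show ?thesis
      using C M R by (simp add: CM mult_smult_distrib)
  qed
  finally show ?case by (simp add: mat_prod_list_Cons)
qed simp

lemma mat_prod_list_absorb_right:
  assumes X: "X \<in> carrier_mat n n"
    and Ms: "\<forall>M\<in>set Ms. M \<in> carrier_mat n n \<and> X * M = c \<cdot>\<^sub>m X"
  shows "X * mat_prod_list n Ms = c ^ length Ms \<cdot>\<^sub>m X"
  using Ms
proof (induction Ms)
  case Nil
  show ?case using X by (simp add: mat_prod_list_Nil)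
next
  case (Cons M Ms)
  have R: "mat_prod_list n Ms \<in> carrier_mat n n"
    using mat_prod_list_carrier Cons.prems by auto
  have M: "M \<in> carrier_mat n n" and XM: "X * M = c \<cdot>\<^sub>m X"
    using Cons.prems by auto
  have "X * (M * mat_prod_list n Ms) = (X * M) * mat_prod_list n Ms"
    using X M R by simp
  also have "\<dots> = c ^ length (M # Ms) \<cdot>\<^sub>m X"
    using X R Cons by (simp add: XM mult_smult_assoc_mat smult_smult_mat)
  finally show ?case by (simp add: mat_prod_list_Cons)
qed

lemma mat_prod_list_absorb_left:
  assumes X: "X \<in> carrier_mat n n"
    and fs: "\<forall>x\<in>set xs. f x \<in> carrier_mat n n \<and> f x * X = c x \<cdot>\<^sub>m X"
  shows "mat_prod_list n (map f xs) * X = (\<Prod>x\<leftarrow>xs. c x) \<cdot>\<^sub>m X"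
  using fs
proof (induction xs)
  case Nil
  show ?case using X by (simp add: mat_prod_list_Nil)
next
  case (Cons x xs)
  have R: "mat_prod_list n (map f xs) \<in> carrier_mat n n"
    using mat_prod_list_carrier Cons.prems by auto
  have M: "f x \<in> carrier_mat n n" and MX: "f x * X = c x \<cdot>\<^sub>m X"
    using Cons.prems by auto
  have "(f x * mat_prod_list n (map f xs)) * X = f x * (mat_prod_list n (map f xs) * X)"
    using X M R by simp
  also have "\<dots> = f x * ((\<Prod>x\<leftarrow>xs. c x) \<cdot>\<^sub>m X)"
    using Cons by simp
  also have "\<dots> = (\<Prod>x\<leftarrow>x # xs. c x) \<cdot>\<^sub>m X"
    using X M by (simp add: mult_smult_distrib MX smult_smult_mat ac_simps)
  finally show ?case by (simp add: mat_prod_list_Cons)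
qed

section \<open>Sign characters and symmetric multisets\<close>

lemma sum_mset_sum_over_set: "(\<Sum>z\<in>#(\<Sum>x\<in>A. M x). g z) = (\<Sum>x\<in>A. \<Sum>z\<in>#M x. g z)"
  by (induction A rule: infinite_finite_induct) auto

lemma image_mset_sum_over_set: "image_mset f (\<Sum>x\<in>A. M x) = (\<Sum>x\<in>A. image_mset f (M x))"
  by (induction A rule: infinite_finite_induct) auto

lemma count_image_mset_involution:
  assumes "\<And>x. f (f x) = x"
  shows "count (image_mset f M) z = count M (f z)"
proof (induction M)
  case (add x M)
  have "z = f x \<longleftrightarrow> f z = x"
    using assms by metis
  with add show ?case by (auto simp: assms)
qed simp

lemma image_mset_uminus_eq_iff_count:
  "image_mset uminus M = M \<longleftrightarrow> (\<forall>z. count M z = count M (- z :: 'a::group_add))"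
  by (auto simp: multiset_eq_iff count_image_mset_involution)

lemma pos_roots_eq_uminus_neg_roots:
  assumes "image_mset uminus M = M"
  shows "pos_roots M = image_mset uminus (neg_roots M)"
proof -
  have "image_mset uminus (neg_roots M) = filter_mset (\<lambda>z. z \<in> \<real> \<and> Re z > 0) (image_mset uminus M)"
    unfolding neg_roots_def by (subst image_mset_filter_mset_swap[symmetric]) simp
  then show ?thesis
    unfolding pos_roots_def assms by simp
qed

text \<open>Sign vectors \<open>\<epsilon> \<in> {\<plusminus>1}\<^sup>k\<close> are indexed by the set \<open>J\<close> of their negative coordinates;
  \<open>sign_char I J = \<Prod>\<^sub>i\<^sub>\<in>\<^sub>I \<epsilon>\<^sub>i\<close> is the scalar by which \<open>\<Prod>\<^sub>i\<^sub>\<in>\<^sub>I P\<^sub>i\<close> acts on \<open>V\<^sub>\<epsilon>\<close>.\<close>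
definition signs :: "nat set \<Rightarrow> nat \<Rightarrow> int" where
  "signs J i = (if i \<in> J then -1 else 1)"

definition sign_char :: "nat set \<Rightarrow> nat set \<Rightarrow> int" where
  "sign_char I J = (\<Prod>i\<in>I. signs J i)"

lemma signs_empty [simp]: "signs {} = (\<lambda>_. 1)"
  by (simp add: fun_eq_iff signs_def)

lemma signs_cases: "signs J i \<in> {1, -1}"
  by (simp add: signs_def)

lemma signs_square: "signs J i * signs J i = 1"
  by (simp add: signs_def)

lemma sign_char_cases: "sign_char I J \<in> {1, -1}"
  unfolding sign_char_def
  by (induction I rule: infinite_finite_induct) (auto simp: signs_def)

lemma sign_char_empty_left [simp]: "sign_char {} J = 1"
  by (simp add: sign_char_def)

lemma sign_char_empty_right [simp]: "sign_char I {} = 1"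
  by (simp add: sign_char_def signs_def)

lemma sign_char_orthogonal:
  assumes K: "finite K" and J0: "J0 \<subseteq> K" and J: "J \<subseteq> K"
  shows "(\<Sum>I\<in>Pow K. sign_char I J0 * sign_char I J) = (if J = J0 then 2 ^ card K else 0)"
proof -
  have "(\<Sum>I\<in>Pow K. sign_char I J0 * sign_char I J)
      = (\<Sum>I\<in>Pow K. (\<Prod>i\<in>I. signs J0 i * signs J i) * (\<Prod>i\<in>K - I. 1))"
    unfolding sign_char_def by (simp add: prod.distrib)
  also have "\<dots> = (\<Prod>i\<in>K. signs J0 i * signs J i + 1)"
    by (rule prod_add[OF K, symmetric])
  also have "\<dots> = (if J = J0 then 2 ^ card K else 0)"
  proof (cases "J = J0")
    case False
    then obtain i where "i \<in> K" "i \<in> J \<longleftrightarrow> i \<notin> J0"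
      using J0 J by blast
    then have "(\<Prod>i\<in>K. signs J0 i * signs J i + 1) = 0"
      using K by (intro prod_zero) (auto simp: signs_def)
    with False show ?thesis by simp
  qed (simp add: signs_square)
  finally show ?thesis .
qed

lemma sign_transform_const_imp_zero:
  fixes d :: "nat set \<Rightarrow> int"
  assumes K: "finite K"
    and const: "\<And>I. I \<subseteq> K \<Longrightarrow> (\<Sum>J\<in>Pow K. sign_char I J * d J) = D"
    and J0: "J0 \<subseteq> K" "J0 \<noteq> {}"
  shows "d J0 = 0"
proof -
  have "d J0 * 2 ^ card K = (\<Sum>J\<in>Pow K. if J = J0 then d J0 * 2 ^ card K else 0)"
    using J0 K by simp
  also have "\<dots> = (\<Sum>J\<in>Pow K. d J * (\<Sum>I\<in>Pow K. sign_char I J0 * sign_char I J))"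
    by (intro sum.cong) (auto simp: sign_char_orthogonal[OF K J0(1)])
  also have "\<dots> = (\<Sum>J\<in>Pow K. \<Sum>I\<in>Pow K. d J * (sign_char I J0 * sign_char I J))"
    by (simp add: sum_distrib_left)
  also have "\<dots> = (\<Sum>I\<in>Pow K. \<Sum>J\<in>Pow K. d J * (sign_char I J0 * sign_char I J))"
    by (rule sum.swap)
  also have "\<dots> = (\<Sum>I\<in>Pow K. sign_char I J0 * (\<Sum>J\<in>Pow K. sign_char I J * d J))"
    by (simp add: sum_distrib_left ac_simps)
  also have "\<dots> = (\<Sum>I\<in>Pow K. sign_char I J0 * sign_char I {} * D)"
    by (intro sum.cong) (auto simp: const)
  also have "\<dots> = 0"
    using sign_char_orthogonal[OF K J0(1), of "{}"] J0 by (simp add: sum_distrib_right[symmetric])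
  finally show ?thesis by simp
qed

lemma count_image_mset_sign:
  assumes "c \<in> {1, -1}"
  shows "count (image_mset (\<lambda>w. of_int c * w) M) z = count M (of_int c * z :: 'a::ring_1)"
  using assms by (auto intro: count_image_mset_involution)

lemma symmetric_if_sign_twists_agree:
  fixes M :: "nat set \<Rightarrow> 'a::ring_1 multiset"
  assumes K: "finite K"
    and twists: "\<And>I. I \<subseteq> K \<Longrightarrow> (\<Sum>J\<in>Pow K. image_mset (\<lambda>w. of_int (sign_char I J) * w) (M J)) = N"
    and J0: "J0 \<subseteq> K" "J0 \<noteq> {}"
  shows "image_mset uminus (M J0) = M J0"
proof -
  have "count (M J0) z = count (M J0) (- z)" for z
  proof -
    define d where "d J = int (count (M J) z) - int (count (M J) (- z))" for J
    \<comment> \<open>a twist by \<open>-1\<close> swaps the multiplicities of \<open>z\<close> and \<open>-z\<close>\<close>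
    have twisted_count: "2 * int (count (image_mset (\<lambda>w. of_int (sign_char I J) * w) (M J)) z)
        = (int (count (M J) z) + int (count (M J) (- z))) + sign_char I J * d J" for I J
      using sign_char_cases[of I J] by (auto simp: count_image_mset_sign d_def)
    have transform: "2 * int (count N z)
        = (\<Sum>J\<in>Pow K. int (count (M J) z) + int (count (M J) (- z))) + (\<Sum>J\<in>Pow K. sign_char I J * d J)"
      if "I \<subseteq> K" for I
      unfolding twists[OF that, symmetric] count_sum
      by (simp add: sum_distrib_left twisted_count sum.distrib)
    have "(\<Sum>J\<in>Pow K. sign_char I J * d J) = (\<Sum>J\<in>Pow K. sign_char {} J * d J)"
      if "I \<subseteq> K" for I
      using transform[OF that] transform[of "{}"] by simp
    then have "d J0 = 0"
      using sign_transform_const_imp_zero[OF K _ J0] by blast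
    then show ?thesis by (simp add: d_def)
  qed
  then show ?thesis
    by (simp add: image_mset_uminus_eq_iff_count)
qed

section \<open>The operators \<open>F\<^sub>\<epsilon>\<close>\<close>

definition eps_factor :: "nat \<Rightarrow> (nat \<Rightarrow> complex mat) \<Rightarrow> (nat \<Rightarrow> int) \<Rightarrow> nat \<Rightarrow> complex mat" where
  "eps_factor n P eps i = 1\<^sub>m n + of_int (eps i) \<cdot>\<^sub>m P i"

lemma eps_op_eq_mat_prod_list: "eps_op n k P eps = mat_prod_list n (map (eps_factor n P eps) [0..<k])"
  unfolding eps_op_def eps_factor_def ..

lemma eps_factor_carrier: "P i \<in> carrier_mat n n \<Longrightarrow> eps_factor n P eps i \<in> carrier_mat n n"
  unfolding eps_factor_def by simp

lemma mult_eps_factor: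
  assumes G: "G \<in> carrier_mat n n" and P: "P i \<in> carrier_mat n n"
  shows "G * eps_factor n P eps i = G + of_int (eps i) \<cdot>\<^sub>m (G * P i)"
proof -
  have "G * (1\<^sub>m n + of_int (eps i) \<cdot>\<^sub>m P i) = G * 1\<^sub>m n + G * (of_int (eps i) \<cdot>\<^sub>m P i)"
    using G P by (intro mult_add_distrib_mat) auto
  then show ?thesis
    unfolding eps_factor_def using G P by (simp add: mult_smult_distrib)
qed

lemma eps_factor_mult:
  assumes G: "G \<in> carrier_mat n n" and P: "P i \<in> carrier_mat n n"
  shows "eps_factor n P eps i * G = G + of_int (eps i) \<cdot>\<^sub>m (P i * G)"
proof -
  have "(1\<^sub>m n + of_int (eps i) \<cdot>\<^sub>m P i) * G = 1\<^sub>m n * G + (of_int (eps i) \<cdot>\<^sub>m P i) * G"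
    using G P by (intro add_mult_distrib_mat) auto
  then show ?thesis
    unfolding eps_factor_def using G P by (simp add: mult_smult_assoc_mat)
qed

lemma eps_op_cong: "(\<And>i. i < k \<Longrightarrow> eps i = eps' i) \<Longrightarrow> eps_op n k P eps = eps_op n k P eps'"
  unfolding eps_op_def by (intro arg_cong[where f = "mat_prod_list n"]) auto

lemma eps_op_Suc:
  assumes P: "\<And>i. i \<le> k \<Longrightarrow> P i \<in> carrier_mat n n"
  shows "eps_op n (Suc k) P eps = eps_op n k P eps + of_int (eps k) \<cdot>\<^sub>m (eps_op n k P eps * P k)"
proof -
  have F: "eps_op n k P eps \<in> carrier_mat n n"
    unfolding eps_op_eq_mat_prod_list using P by (intro mat_prod_list_carrier) (auto intro: eps_factor_carrier)
  have "eps_op n (Suc k) P eps = mat_prod_list n (map (eps_factor n P eps) [0..<k] @ [eps_factor n P eps k])"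
    unfolding eps_op_eq_mat_prod_list by simp
  also have "\<dots> = eps_op n k P eps * mat_prod_list n [eps_factor n P eps k]"
    unfolding eps_op_eq_mat_prod_list using P
    by (intro mat_prod_list_append) (auto intro: eps_factor_carrier)
  also have "mat_prod_list n [eps_factor n P eps k] = eps_factor n P eps k"
    using eps_factor_carrier[where P = P and i = k and eps = eps, OF P[OF order_refl]]
    by (simp add: mat_prod_list_Cons mat_prod_list_Nil)
  also have "eps_op n k P eps * \<dots> = eps_op n k P eps + of_int (eps k) \<cdot>\<^sub>m (eps_op n k P eps * P k)"
    by (rule mult_eps_factor[where P = P and i = k, OF F P[OF order_refl]])
  finally show ?thesis .
qed

text \<open>The entrywise form of \<open>\<Sum>\<^sub>\<epsilon> \<Prod>\<^sub>i (1 + \<epsilon>\<^sub>i P\<^sub>i) = 2\<^sup>k\<close>; only the shape of the \<open>P\<^sub>i\<close> matters.\<close>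
lemma sum_eps_op_index:
  assumes P: "\<And>i. i < k \<Longrightarrow> P i \<in> carrier_mat n n" and a: "a < n" and b: "b < n"
  shows "(\<Sum>J\<in>Pow {0..<k}. eps_op n k P (signs J) $$ (a,b)) = (if a = b then 2 ^ k else 0)"
  using P
proof (induction k)
  case 0
  then show ?case using a b by (simp add: eps_op_def mat_prod_list_Nil)
next
  case (Suc k)
  have Pk: "\<And>i. i \<le> k \<Longrightarrow> P i \<in> carrier_mat n n" using Suc.prems by auto
  have G: "eps_op n k P eps \<in> carrier_mat n n" for eps
    unfolding eps_op_eq_mat_prod_list using Pk by (intro mat_prod_list_carrier) (auto intro: eps_factor_carrier)
  \<comment> \<open>\<open>J\<close> and \<open>insert k J\<close> differ only in the sign of the last factor, so their terms add up to twice the old one\<close>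
  have pair: "eps_op n (Suc k) P (signs J) $$ (a,b) + eps_op n (Suc k) P (signs (insert k J)) $$ (a,b)
      = 2 * eps_op n k P (signs J) $$ (a,b)" if J: "J \<in> Pow {0..<k}" for J
  proof -
    have "eps_op n k P (signs (insert k J)) = eps_op n k P (signs J)"
      by (rule eps_op_cong) (auto simp: signs_def)
    moreover have "k \<notin> J" using J by auto
    ultimately show ?thesis
      using eps_op_Suc[OF Pk, where eps = "signs J"] eps_op_Suc[OF Pk, where eps = "signs (insert k J)"]
        a b G[of "signs J"] Pk[of k] by (simp add: signs_def)
  qed
  let ?f = "\<lambda>J. eps_op n (Suc k) P (signs J) $$ (a,b)"
  have disj: "Pow {0..<k} \<inter> insert k ` Pow {0..<k} = {}" by auto
  have inj: "inj_on (insert k) (Pow {0..<k})"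
    by (rule inj_onI) (metis Diff_insert_absorb PowD atLeastLessThan_iff less_irrefl subsetD)
  have "(\<Sum>J\<in>Pow {0..<Suc k}. ?f J) = (\<Sum>J\<in>Pow {0..<k}. ?f J) + (\<Sum>J\<in>insert k ` Pow {0..<k}. ?f J)"
    by (simp add: atLeast0_lessThan_Suc Pow_insert sum.union_disjoint disj)
  also have "\<dots> = (\<Sum>J\<in>Pow {0..<k}. ?f J + ?f (insert k J))"
    by (simp add: sum.reindex[OF inj] sum.distrib)
  also have "\<dots> = 2 * (\<Sum>J\<in>Pow {0..<k}. eps_op n k P (signs J) $$ (a,b))"
    by (simp add: pair sum_distrib_left)
  finally show ?case using Suc by simp
qed

locale commuting_involutions =
  fixes n k :: nat and P :: "nat \<Rightarrow> complex mat"
  assumes P_carrier: "\<And>i. i < k \<Longrightarrow> P i \<in> carrier_mat n n"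
    and P_invol: "\<And>i. i < k \<Longrightarrow> P i * P i = 1\<^sub>m n"
    and P_comm: "\<And>i j. i < k \<Longrightarrow> j < k \<Longrightarrow> P i * P j = P j * P i"
begin

lemma eps_factor_carrier_mat: "i < k \<Longrightarrow> eps_factor n P eps i \<in> carrier_mat n n"
  by (rule eps_factor_carrier[where P = P, OF P_carrier])

lemma eps_factor_commute:
  assumes C: "C \<in> carrier_mat n n" and i: "i < k" and CP: "C * P i = P i * C"
  shows "C * eps_factor n P eps i = eps_factor n P eps i * C"
  using mult_eps_factor[where P = P and i = i, OF C P_carrier[OF i]]
    eps_factor_mult[where P = P and i = i, OF C P_carrier[OF i]] CP
  by simp

lemma eps_factors_commute:
  assumes C: "C \<in> carrier_mat n n" and CP: "\<And>i. i < k \<Longrightarrow> C * P i = P i * C"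
  shows "\<forall>M\<in>set (map (eps_factor n P eps) [0..<k]). M \<in> carrier_mat n n \<and> C * M = M * C"
  using eps_factor_commute[OF C _ CP] eps_factor_carrier_mat by auto

lemma eps_op_carrier: "eps_op n k P eps \<in> carrier_mat n n"
  unfolding eps_op_eq_mat_prod_list
  by (intro mat_prod_list_carrier) (auto intro: eps_factor_carrier_mat)

lemma eps_op_commute:
  assumes C: "C \<in> carrier_mat n n" and CP: "\<And>i. i < k \<Longrightarrow> C * P i = P i * C"
  shows "C * eps_op n k P eps = eps_op n k P eps * C"
  unfolding eps_op_eq_mat_prod_list by (rule mat_prod_list_commute[OF C eps_factors_commute[OF C CP]])

lemma P_mult_eps_op:
  assumes i: "i < k" and eps: "eps i \<in> {1, -1}"
  shows "P i * eps_op n k P eps = of_int (eps i) \<cdot>\<^sub>m eps_op n k P eps"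
  unfolding eps_op_eq_mat_prod_list
proof (rule mat_prod_list_mult_eigen[OF P_carrier[OF i]])
  show "\<forall>M\<in>set (map (eps_factor n P eps) [0..<k]). M \<in> carrier_mat n n \<and> P i * M = M * P i"
    using P_comm i by (intro eps_factors_commute[OF P_carrier[OF i]]) auto
  show "eps_factor n P eps i \<in> set (map (eps_factor n P eps) [0..<k])"
    using i by simp
  have Pi: "P i \<in> carrier_mat n n" by (rule P_carrier[OF i])
  show "P i * eps_factor n P eps i = of_int (eps i) \<cdot>\<^sub>m eps_factor n P eps i"
    using mult_eps_factor[where P = P and i = i, OF Pi Pi] P_invol[OF i] Pi eps
    unfolding eps_factor_def by (auto intro!: eq_matI)
qed

lemma eps_op_square:
  assumes eps: "\<And>i. i < k \<Longrightarrow> eps i \<in> {1, -1}"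
  shows "eps_op n k P eps * eps_op n k P eps = 2 ^ k \<cdot>\<^sub>m eps_op n k P eps"
proof -
  let ?F = "eps_op n k P eps"
  have F: "?F \<in> carrier_mat n n" by (rule eps_op_carrier)
  have "?F * eps_factor n P eps i = 2 \<cdot>\<^sub>m ?F" if i: "i < k" for i
  proof -
    have "?F * P i = of_int (eps i) \<cdot>\<^sub>m ?F"
      using eps_op_commute[OF P_carrier[OF i]] P_comm i P_mult_eps_op[where eps = eps, OF i eps[OF i]] by metis
    then show ?thesis
      using mult_eps_factor[where P = P and i = i, OF F P_carrier[OF i]] F eps[OF i]
      by (auto intro!: eq_matI)
  qed
  then have "?F * mat_prod_list n (map (eps_factor n P eps) [0..<k])
      = 2 ^ length (map (eps_factor n P eps) [0..<k]) \<cdot>\<^sub>m ?F"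
    by (intro mat_prod_list_absorb_right[OF F]) (auto intro: eps_factor_carrier_mat)
  then show ?thesis
    unfolding eps_op_eq_mat_prod_list[symmetric] by simp
qed

lemma mat_prod_set_carrier:
  assumes I: "I \<subseteq> {0..<k}"
  shows "mat_prod_set n P I \<in> carrier_mat n n"
proof -
  have "\<forall>i\<in>I. P i \<in> carrier_mat n n" using I P_carrier by auto
  then show ?thesis
    unfolding mat_prod_set_def using finite_subset[OF I] by (intro mat_prod_list_carrier) auto
qed

lemma mat_prod_set_mult_eps_op:
  assumes I: "I \<subseteq> {0..<k}" and eps: "\<And>i. i < k \<Longrightarrow> eps i \<in> {1, -1}"
  shows "mat_prod_set n P I * eps_op n k P eps = of_int (\<Prod>i\<in>I. eps i) \<cdot>\<^sub>m eps_op n k P eps"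
proof -
  have fin: "finite I" using I finite_subset by auto
  have "mat_prod_set n P I * eps_op n k P eps
      = (\<Prod>i\<leftarrow>sorted_list_of_set I. of_int (eps i)) \<cdot>\<^sub>m eps_op n k P eps"
    unfolding mat_prod_set_def using I fin P_carrier P_mult_eps_op[where eps = eps, OF _ eps]
    by (intro mat_prod_list_absorb_left[OF eps_op_carrier]) auto
  also have "(\<Prod>i\<leftarrow>sorted_list_of_set I. of_int (eps i)) = (\<Prod>i\<in>I. of_int (eps i) :: complex)"
    using prod.distinct_set_conv_list[of "sorted_list_of_set I" "\<lambda>i. of_int (eps i) :: complex"] fin
    by simp
  finally show ?thesis by simp
qed

lemma mat_trace_sum_eps_op:
  assumes X: "X \<in> carrier_mat n n"
  shows "(\<Sum>J\<in>Pow {0..<k}. mat_trace (X * eps_op n k P (signs J))) = 2 ^ k * mat_trace X"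
proof -
  let ?F = "\<lambda>J. eps_op n k P (signs J)"
  have "(\<Sum>J\<in>Pow {0..<k}. mat_trace (X * ?F J))
      = (\<Sum>J\<in>Pow {0..<k}. \<Sum>a<n. \<Sum>b<n. X $$ (a,b) * ?F J $$ (b,a))"
  proof (intro sum.cong refl)
    fix J
    have "?F J \<in> carrier_mat n n" by (rule eps_op_carrier)
    then show "mat_trace (X * ?F J) = (\<Sum>a<n. \<Sum>b<n. X $$ (a,b) * ?F J $$ (b,a))"
      using X by (simp add: mat_trace_def scalar_prod_def atLeast0LessThan)
  qed
  also have "\<dots> = (\<Sum>a<n. \<Sum>b<n. \<Sum>J\<in>Pow {0..<k}. X $$ (a,b) * ?F J $$ (b,a))"
    by (subst sum.swap, subst (2) sum.swap) (rule refl)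
  also have "\<dots> = (\<Sum>a<n. \<Sum>b<n. X $$ (a,b) * (\<Sum>J\<in>Pow {0..<k}. ?F J $$ (b,a)))"
    by (simp add: sum_distrib_left)
  also have "\<dots> = (\<Sum>a<n. X $$ (a,a) * 2 ^ k)"
    by (simp add: sum_eps_op_index P_carrier if_distrib sum.delta cong: if_cong)
  also have "\<dots> = 2 ^ k * mat_trace X"
    using X by (simp add: mat_trace_def sum_distrib_left mult.commute)
  finally show ?thesis .
qed

lemma dim_eps_space:
  assumes eps: "\<And>i. i < k \<Longrightarrow> eps i \<in> {1, -1}"
    and S: "S \<in> carrier_mat n m"
    and inj: "\<And>x. x \<in> carrier_vec m \<Longrightarrow> S *\<^sub>v x = 0\<^sub>v n \<Longrightarrow> x = 0\<^sub>v m"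
    and range: "{S *\<^sub>v x | x. x \<in> carrier_vec m} = eps_space n k P eps"
  shows "m = col_dim n (eps_op n k P eps)"
proof -
  let ?F = "eps_op n k P eps"
  \<comment> \<open>the trace of \<open>F\<close> is \<open>2\<^sup>k\<close> times the dimension of its range, whichever basis is used\<close>
  have trace_F: "mat_trace ?F = 2 ^ k * of_nat m'"
    if S'_carrier: "S' \<in> carrier_mat n m'"
      and inj': "\<And>x. x \<in> carrier_vec m' \<Longrightarrow> S' *\<^sub>v x = 0\<^sub>v n \<Longrightarrow> x = 0\<^sub>v m'"
      and range': "{S' *\<^sub>v x | x. x \<in> carrier_vec m'} = {?F *\<^sub>v w | w. w \<in> carrier_vec n}" for S' m'
  proof -
    have "1\<^sub>m n * S' = S' * 1\<^sub>m m'"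
      using S'_carrier by simp
    from mat_trace_mult_range_idempotent[OF eps_op_carrier eps_op_square[OF eps] S'_carrier inj'
        range' one_carrier_mat one_carrier_mat this]
    have "mat_trace (1\<^sub>m n * ?F) = 2 ^ k * mat_trace (1\<^sub>m m')" .
    then show ?thesis
      using eps_op_carrier[of eps] by (simp add: mat_trace_one)
  qed
  have "mat_trace ?F = 2 ^ k * of_nat (col_dim n ?F)"
    by (rule vec_space.injective_basis_of_range[OF eps_op_carrier[of eps], folded col_dim_def])
      (rule trace_F)
  with trace_F[OF S inj range[unfolded eps_space_def]] show ?thesis
    by simp
qed

end

section \<open>Restrictions of \<open>A\<close> to the subspaces \<open>V\<^sub>\<epsilon>\<close>\<close>

lemma restr_repE:
  assumes "restr_rep n A W B"
  obtains S m where "S \<in> carrier_mat n m" and "B \<in> carrier_mat m m"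
    and "\<And>x. x \<in> carrier_vec m \<Longrightarrow> S *\<^sub>v x = 0\<^sub>v n \<Longrightarrow> x = 0\<^sub>v m"
    and "{S *\<^sub>v x | x. x \<in> carrier_vec m} = W" and "A * S = S * B"
  using assms unfolding restr_rep_def by blast

locale commuting_involutions_operator = commuting_involutions +
  fixes A :: "complex mat"
  assumes A_carrier: "A \<in> carrier_mat n n"
    and A_comm: "\<And>i. i < k \<Longrightarrow> A * P i = P i * A"
begin

lemma restr_rep_eps_space_exists: "\<exists>B. restr_rep n A (eps_space n k P eps) B"
proof (rule vec_space.injective_basis_of_range[OF eps_op_carrier[of eps], folded col_dim_def])
  let ?F = "eps_op n k P eps" and ?m = "col_dim n (eps_op n k P eps)"
  fix S assume S: "S \<in> carrier_mat n ?m"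
    and inj: "\<And>x. x \<in> carrier_vec ?m \<Longrightarrow> S *\<^sub>v x = 0\<^sub>v n \<Longrightarrow> x = 0\<^sub>v ?m"
    and range: "{S *\<^sub>v x | x. x \<in> carrier_vec ?m} = {?F *\<^sub>v w | w. w \<in> carrier_vec n}"
  \<comment> \<open>\<open>A\<close> commutes with \<open>F\<close>, so it maps the range of \<open>F\<close> into itself\<close>
  have AS_range: "(A * S) *\<^sub>v v \<in> {S *\<^sub>v x | x. x \<in> carrier_vec ?m}" if v: "v \<in> carrier_vec ?m" for v
  proof -
    have "S *\<^sub>v v \<in> {?F *\<^sub>v w | w. w \<in> carrier_vec n}"
      using v unfolding range[symmetric] by blast
    then obtain w where w: "w \<in> carrier_vec n" and Sv: "S *\<^sub>v v = ?F *\<^sub>v w"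
      by blast
    have Aw: "A *\<^sub>v w \<in> carrier_vec n" using A_carrier w by simp
    have "(A * S) *\<^sub>v v = (A * ?F) *\<^sub>v w"
      using A_carrier S eps_op_carrier[of eps] v w by (simp add: Sv)
    also have "\<dots> = ?F *\<^sub>v (A *\<^sub>v w)"
      using A_carrier eps_op_carrier[of eps] w by (simp add: eps_op_commute[OF A_carrier A_comm])
    finally have "(A * S) *\<^sub>v v \<in> {?F *\<^sub>v w | w. w \<in> carrier_vec n}"
      using Aw by blast
    then show ?thesis unfolding range .
  qed
  have "A * S \<in> carrier_mat n ?m" using A_carrier S by simp
  then obtain B where B: "B \<in> carrier_mat ?m ?m" and AS: "A * S = S * B"
    by (rule mat_factor_through_range[OF S _ AS_range])
  have "restr_rep n A (eps_space n k P eps) B"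
    unfolding restr_rep_def eps_space_def
  proof (intro exI[of _ ?m] exI[of _ S] conjI ballI impI)
    show "x = 0\<^sub>v ?m" if "x \<in> carrier_vec ?m" "S *\<^sub>v x = 0\<^sub>v n" for x
      using that by (rule inj)
  qed (fact S B AS range[symmetric])+
  then show "\<exists>B. restr_rep n A (eps_space n k P eps) B" ..
qed

definition block :: "nat set \<Rightarrow> complex mat" where
  "block J = (SOME B. restr_rep n A (eps_space n k P (signs J)) B)"

lemma restr_rep_block: "restr_rep n A (eps_space n k P (signs J)) (block J)"
  unfolding block_def by (rule someI_ex[OF restr_rep_eps_space_exists])

lemma block_carrier:
  "block J \<in> carrier_mat (col_dim n (eps_op n k P (signs J))) (col_dim n (eps_op n k P (signs J)))"
proof (rule restr_repE[OF restr_rep_block])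
  fix S m assume S: "S \<in> carrier_mat n m" and B: "block J \<in> carrier_mat m m"
    and inj: "\<And>x. x \<in> carrier_vec m \<Longrightarrow> S *\<^sub>v x = 0\<^sub>v n \<Longrightarrow> x = 0\<^sub>v m"
    and range: "{S *\<^sub>v x | x. x \<in> carrier_vec m} = eps_space n k P (signs J)"
  have "m = col_dim n (eps_op n k P (signs J))"
    by (rule dim_eps_space[OF signs_cases S inj range])
  with B show ?thesis by simp
qed

text \<open>On \<open>V\<^sub>\<epsilon>\<close> the operator \<open>P\<^sub>I A\<close> is \<open>\<chi>\<^sub>I(\<epsilon>)\<close> times the block of \<open>A\<close>; the trace of its powers
  against the idempotent \<open>2\<^sup>-\<^sup>k F\<^sub>\<epsilon>\<close> therefore only sees the spectrum of that block.\<close>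
lemma mat_trace_twisted_pow_mult_eps_op:
  assumes I: "I \<subseteq> {0..<k}"
  shows "mat_trace ((mat_prod_set n P I * A) ^\<^sub>m j * eps_op n k P (signs J))
    = 2 ^ k * (\<Sum>z\<in>#spectrum_mset (block J). (of_int (sign_char I J) * z) ^ j)"
proof (rule restr_repE[OF restr_rep_block[of J]])
  let ?F = "eps_op n k P (signs J)" and ?c = "of_int (sign_char I J) :: complex"
  let ?C = "mat_prod_set n P I * A"
  fix S m assume S: "S \<in> carrier_mat n m" and B: "block J \<in> carrier_mat m m"
    and inj: "\<And>x. x \<in> carrier_vec m \<Longrightarrow> S *\<^sub>v x = 0\<^sub>v n \<Longrightarrow> x = 0\<^sub>v m"
    and range_eps: "{S *\<^sub>v x | x. x \<in> carrier_vec m} = eps_space n k P (signs J)"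
    and AS: "A * S = S * block J"
  have range: "{S *\<^sub>v x | x. x \<in> carrier_vec m} = {?F *\<^sub>v w | w. w \<in> carrier_vec n}"
    using range_eps unfolding eps_space_def .
  have PI: "mat_prod_set n P I \<in> carrier_mat n n" by (rule mat_prod_set_carrier[OF I])
  have C: "?C \<in> carrier_mat n n" using PI A_carrier by simp
  have "mat_prod_set n P I * ?F = ?c \<cdot>\<^sub>m ?F"
    using mat_prod_set_mult_eps_op[OF I signs_cases] unfolding sign_char_def by simp
  then have PS: "mat_prod_set n P I * S = ?c \<cdot>\<^sub>m S"
    by (rule mult_range_smult[OF PI eps_op_carrier S]) (unfold range[symmetric], blast)
  have "?C * S = mat_prod_set n P I * S * block J"
    using PI A_carrier S B by (simp add: AS assoc_mult_mat[of _ n n _ n _ m])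
  also have "\<dots> = S * (?c \<cdot>\<^sub>m block J)"
    using S B by (simp add: PS mult_smult_assoc_mat mult_smult_distrib)
  finally have CS: "?C * S = S * (?c \<cdot>\<^sub>m block J)" .
  have "?C ^\<^sub>m j * S = S * (?c \<cdot>\<^sub>m block J) ^\<^sub>m j"
    by (rule pow_mat_intertwine[OF C S _ CS]) (use B in simp)
  moreover have "?F * ?F = 2 ^ k \<cdot>\<^sub>m ?F"
    by (rule eps_op_square) (rule signs_cases)
  ultimately have "mat_trace (?C ^\<^sub>m j * ?F) = 2 ^ k * mat_trace ((?c \<cdot>\<^sub>m block J) ^\<^sub>m j)"
    using C B by (intro mat_trace_mult_range_idempotent[OF eps_op_carrier _ S inj range]) simp_all
  also have "mat_trace ((?c \<cdot>\<^sub>m block J) ^\<^sub>m j) = ?c ^ j * mat_trace (block J ^\<^sub>m j)"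
    using B by (simp add: pow_mat_smult mat_trace_smult[of _ m])
  also have "\<dots> = (\<Sum>z\<in>#spectrum_mset (block J). (?c * z) ^ j)"
    using B by (simp add: mat_trace_pow_eq_power_sum sum_mset_distrib_left power_mult_distrib
        multiset.map_comp comp_def)
  finally show ?thesis .
qed

lemma spectrum_mset_twisted_decomposition:
  assumes I: "I \<subseteq> {0..<k}"
  shows "spectrum_mset (mat_prod_set n P I * A)
    = (\<Sum>J\<in>Pow {0..<k}. image_mset (\<lambda>z. of_int (sign_char I J) * z) (spectrum_mset (block J)))"
proof (rule multiset_eq_if_power_sums_eq)
  fix j
  let ?C = "mat_prod_set n P I * A"
  have C: "?C \<in> carrier_mat n n" using mat_prod_set_carrier[OF I] A_carrier by simp
  have "2 ^ k * (\<Sum>z\<in>#spectrum_mset ?C. z ^ j) = 2 ^ k * mat_trace (?C ^\<^sub>m j)"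
    by (simp add: mat_trace_pow_eq_power_sum[OF C])
  also have "\<dots> = (\<Sum>J\<in>Pow {0..<k}. mat_trace (?C ^\<^sub>m j * eps_op n k P (signs J)))"
    using C by (simp add: mat_trace_sum_eps_op)
  also have "\<dots> = 2 ^ k * (\<Sum>J\<in>Pow {0..<k}. \<Sum>z\<in>#spectrum_mset (block J). (of_int (sign_char I J) * z) ^ j)"
    by (simp add: mat_trace_twisted_pow_mult_eps_op[OF I] sum_distrib_left)
  also have "\<dots> = 2 ^ k * (\<Sum>z\<in>#(\<Sum>J\<in>Pow {0..<k}. image_mset (\<lambda>z. of_int (sign_char I J) * z)
      (spectrum_mset (block J))). z ^ j)"
    by (simp add: sum_mset_sum_over_set multiset.map_comp comp_def)
  finally show "(\<Sum>z\<in>#spectrum_mset ?C. z ^ j) = (\<Sum>z\<in>#(\<Sum>J\<in>Pow {0..<k}.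
      image_mset (\<lambda>z. of_int (sign_char I J) * z) (spectrum_mset (block J))). z ^ j)"
    by (rule mult_left_cancel[THEN iffD1, rotated]) simp
qed

lemma proots_restr_char_poly_eq_block:
  assumes eps: "\<forall>i<k. eps i \<in> {1, -1}"
  shows "proots (restr_char_poly n A (eps_space n k P eps)) = spectrum_mset (block {i. i < k \<and> eps i = -1})"
proof -
  have "eps_op n k P eps = eps_op n k P (signs {i. i < k \<and> eps i = -1})"
    using eps by (intro eps_op_cong) (auto simp: signs_def)
  then show ?thesis
    unfolding restr_char_poly_def block_def spectrum_mset_def eps_space_def by simp
qed

end

theorem proposition4p6:
  fixes k n :: nat and P :: "nat \<Rightarrow> complex mat" and A :: "complex mat"
  assumes k_pos: "k \<ge> 1"
    and P_carrier: "\<And>i. i < k \<Longrightarrow> P i \<in> carrier_mat n n"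
    and P_invol: "\<And>i. i < k \<Longrightarrow> P i * P i = 1\<^sub>m n"
    and P_comm: "\<And>i j. i < k \<Longrightarrow> j < k \<Longrightarrow> P i * P j = P j * P i"
    and A_carrier: "A \<in> carrier_mat n n"
    and A_comm: "\<And>i. i < k \<Longrightarrow> A * P i = P i * A"
    and spec: "\<And>I. I \<subseteq> {0..<k} \<Longrightarrow> I \<noteq> {} \<Longrightarrow>
                 spectrum_mset A = spectrum_mset (mat_prod_set n P I * A)"
  shows "(\<forall>eps. (\<forall>i<k. eps i \<in> {1, -1}) \<and> (\<exists>i<k. eps i \<noteq> 1) \<longrightarrow>
            pos_roots (proots (restr_char_poly n A (eps_space n k P eps)))
            = image_mset uminus (neg_roots (proots (restr_char_poly n A (eps_space n k P eps)))))
       \<and> (\<exists>S. S \<subseteq># spectrum_mset A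
            \<and> size S = n - col_dim n (eps_op n k P (\<lambda>_. 1))
            \<and> image_mset uminus S = S)"
proof -
  interpret commuting_involutions_operator n k P A
    by unfold_locales (fact P_carrier P_invol P_comm A_carrier A_comm)+
  let ?K = "{0..<k}" and ?M = "\<lambda>J. spectrum_mset (block J)"
  have twists: "(\<Sum>J\<in>Pow ?K. image_mset (\<lambda>z. of_int (sign_char I J) * z) (?M J)) = spectrum_mset A"
    if "I \<subseteq> ?K" for I
    using spectrum_mset_twisted_decomposition[OF that] spec[OF that] A_carrier
    by (cases "I = {}") (simp_all add: mat_prod_set_def mat_prod_list_Nil)
  define S where "S = (\<Sum>J\<in>Pow ?K - {{}}. ?M J)"
  have symmetric: "image_mset uminus (?M J) = ?M J" if "J \<subseteq> ?K" "J \<noteq> {}" for J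
    by (rule symmetric_if_sign_twists_agree[OF _ twists that]) simp_all
  have "pos_roots (proots (restr_char_poly n A (eps_space n k P eps)))
      = image_mset uminus (neg_roots (proots (restr_char_poly n A (eps_space n k P eps))))"
    if "\<forall>i<k. eps i \<in> {1, -1}" "\<exists>i<k. eps i \<noteq> 1" for eps
    unfolding proots_restr_char_poly_eq_block[OF that(1)]
    using that by (intro pos_roots_eq_uminus_neg_roots symmetric) auto
  moreover have "spectrum_mset A = ?M {} + S"
    using twists[of "{}"] by (simp add: S_def sum.remove[of "Pow ?K" "{}"])
  moreover have "size (?M {}) = col_dim n (eps_op n k P (\<lambda>_. 1))"
    using block_carrier[of "{}"] by (simp add: size_spectrum_mset)
  moreover have "image_mset uminus S = S"
    unfolding S_def image_mset_sum_over_set using symmetric by (intro sum.cong) auto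
  ultimately show ?thesis
    using size_spectrum_mset[OF A_carrier] by (metis add_diff_cancel_left' mset_subset_eq_add_right size_union)
qed

end
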